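(* Let $p\ge5$. For every assignment $\alpha$ on the white metallic tree, $\mathcal W_\alpha$ possesses the preferred son property: for every node $\nu$, exactly one son of $\nu$ in $\mathcal W_\alpha$ has metallic code ending with $0$, and the metallic code of that son is the metallic code of $\nu$ followed by $0$ (this son is called the preferred son of $\nu$). Moreover, for every $n\ge0$, $m_{n+1}$ is the preferred son of $m_n$ in $\mathcal W_\alpha$.
   Context: Fix $p\ge5$. Metallic numbers: $m_{-1}=0$, $m_0=1$, $m_{n+2}=(p-2)m_{n+1}-m_n$. With $d=p-3$, $c=p-4$, the metallic code of a positive integer $n$ is the unique word $a_k\cdots a_0$ over $\{0,\dots,p-3\}$ with $a_k\ne0$, $n=\sum a_im_i$, containing no factor $d\,c^j\,d$ ($j\ge0$). White metallic tree under an assignment $\alpha$, $\mathcal W_\alpha$: nodes are the positive integers, each black or white; root $1$ is white; nodes are processed in increasing order and node $\nu$ receives $p-2$ sons if white and $p-3$ sons if black, namely the smallest integers not yet used, in increasing order; an assignment specifies, for each node, the position (leftmost = $1$) of its unique black son among its sons (possibly depending on the node), other sons being white. *)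

theory Defs
  imports Main
begin

text \<open>For p \<ge> 5 the sequence is increasing,
  so natural-number subtraction never truncates.\<close>
fun metal :: "nat \<Rightarrow> nat \<Rightarrow> nat" where
  "metal p 0 = 1"
| "metal p (Suc 0) = p - 2"
| "metal p (Suc (Suc n)) = (p - 2) * metal p (Suc n) - metal p n"

text \<open>Words are stored little-endian: the list [a_0, a_1, ..., a_k] represents a_k...a_0.\<close>
definition word_val :: "nat \<Rightarrow> nat list \<Rightarrow> nat" where
  "word_val p w = (\<Sum>i<length w. w ! i * metal p i)"

text \<open>Forbidden factor d c^j d with d = p-3, c = p-4 (a palindrome, so orientation irrelevant).\<close>
definition has_forbidden :: "nat \<Rightarrow> nat list \<Rightarrow> bool" where
  "has_forbidden p w = (\<exists>u v j. w = u @ [p - 3] @ replicate j (p - 4) @ [p - 3] @ v)"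

definition valid_code :: "nat \<Rightarrow> nat list \<Rightarrow> bool" where
  "valid_code p w = (w \<noteq> [] \<and> last w \<noteq> 0 \<and> (\<forall>a\<in>set w. a \<le> p - 3) \<and> \<not> has_forbidden p w)"

definition metal_code :: "nat \<Rightarrow> nat \<Rightarrow> nat list" where
  "metal_code p n = (THE w. valid_code p w \<and> word_val p w = n)"

text \<open>Construction of the tree W_alpha. build p \<alpha> k = (colour map, next unused integer)
  after processing nodes 1..k. Colour True = white. Nodes not yet assigned a colour
  default to white (only the root 1 is unassigned by construction, and it is white).
  \<alpha> \<nu> is the position (leftmost = 1) of the black son of \<nu>.\<close>
fun build :: "nat \<Rightarrow> (nat \<Rightarrow> nat) \<Rightarrow> nat \<Rightarrow> (nat \<Rightarrow> bool) \<times> nat" where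
  "build p \<alpha> 0 = ((\<lambda>x. True), 2)"
| "build p \<alpha> (Suc k) =
     (let (col, nx) = build p \<alpha> k;
          dg = (if col (Suc k) then p - 2 else p - 3)
      in ((\<lambda>x. if nx \<le> x \<and> x < nx + dg then x - nx + 1 \<noteq> \<alpha> (Suc k) else col x), nx + dg))"

definition white :: "nat \<Rightarrow> (nat \<Rightarrow> nat) \<Rightarrow> nat \<Rightarrow> bool" where
  "white p \<alpha> x = fst (build p \<alpha> x) x"

definition sons :: "nat \<Rightarrow> (nat \<Rightarrow> nat) \<Rightarrow> nat \<Rightarrow> nat set" where
  "sons p \<alpha> \<nu> = {snd (build p \<alpha> (\<nu> - 1)) ..< snd (build p \<alpha> \<nu>)}"

definition assignment :: "nat \<Rightarrow> (nat \<Rightarrow> nat) \<Rightarrow> bool" where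
  "assignment p \<alpha> = (\<forall>\<nu>\<ge>1. 1 \<le> \<alpha> \<nu> \<and> \<alpha> \<nu> \<le> card (sons p \<alpha> \<nu>))"

end

theory Submission
  imports Defs
begin

text \<open>Let \<open>shift \<nu>\<close> be the number whose code is the code of \<open>\<nu>\<close> followed by the digit 0, and
  \<open>code_parent n\<close> the number whose code is that of \<open>n\<close> with its last digit deleted. Every code of
  length at least two arises by appending a digit \<open>b \<le> d\<close> to the code of its code parent \<open>\<mu>\<close>,
  where only \<open>b = d\<close> is excluded, and only when the code of \<open>\<mu>\<close> ends in \<open>d c\<^sup>j\<close> (\<open>\<mu>\<close> is
  critical). As appending digits preserves the order, the numbers with code parent \<open>\<mu>\<close> form the
  interval from \<open>shift \<mu>\<close> to \<open>shift (\<mu> + 1)\<close>, so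
  \<open>shift (\<nu> + 1) + code_parent \<nu> + [\<nu> critical] = (p - 2) (\<nu> + 1)\<close>. In the tree, a node has
  \<open>p - 2 - [black]\<close> sons, so the first integer left unused after processing \<open>\<nu>\<close> is
  \<open>2 + (p - 2) \<nu>\<close> minus the number of black nodes up to \<open>\<nu>\<close>. An induction along the tree shows
  that the tree parent and the code parent of every node differ by at most one, which makes the
  two counts interlace: \<open>shift \<nu>\<close> is a son of \<open>\<nu>\<close>. Sons of distinct nodes are distinct and every
  code ending in 0 is that of a shift, so \<open>shift \<nu>\<close> is the only such son; finally the code of
  \<open>m\<^sub>n\<close> is \<open>1 0\<^sup>n\<close>, whence \<open>shift m\<^sub>n = m\<^sub>n\<^sub>+\<^sub>1\<close>.\<close>

subsection \<open>Words\<close>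

lemma word_val_Nil [simp]: "word_val p [] = 0"
  unfolding word_val_def by simp

lemma word_val_snoc: "word_val p (w @ [a]) = word_val p w + a * metal p (length w)"
  unfolding word_val_def by (simp add: nth_append)

lemma word_val_Cons: "word_val p (b # w) = b + word_val p (0 # w)"
  unfolding word_val_def by (simp add: sum.lessThan_Suc_shift del: sum.lessThan_Suc)

lemma word_val_replicate_0: "word_val p (replicate k 0) = 0"
  unfolding word_val_def by (intro sum.neutral) simp

lemma word_val_append_zeros [simp]: "word_val p (w @ replicate k 0) = word_val p w"
  by (induction k) (simp_all add: word_val_snoc flip: replicate_append_same append_assoc)

definition admissible :: "nat \<Rightarrow> nat list \<Rightarrow> bool" where
  "admissible p w \<longleftrightarrow> (\<forall>a\<in>set w. a \<le> p - 3) \<and> \<not> has_forbidden p w"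

text \<open>A word is top (low) critical if writing the digit \<open>d = p - 3\<close> in front of (after) its
  written form, most significant digit first, creates a forbidden factor \<open>d c\<^sup>j d\<close>.\<close>

definition top_critical :: "nat \<Rightarrow> nat list \<Rightarrow> bool" where
  "top_critical p w \<longleftrightarrow> (\<exists>u j. w = u @ [p - 3] @ replicate j (p - 4))"

definition low_critical :: "nat \<Rightarrow> nat list \<Rightarrow> bool" where
  "low_critical p w \<longleftrightarrow> (\<exists>u j. w = replicate j (p - 4) @ [p - 3] @ u)"

lemma has_forbidden_snoc:
  "has_forbidden p (w @ [a]) \<longleftrightarrow> has_forbidden p w \<or> a = p - 3 \<and> top_critical p w"
proof
  assume "has_forbidden p (w @ [a])"
  then obtain u v j where w: "w @ [a] = u @ [p - 3] @ replicate j (p - 4) @ [p - 3] @ v"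
    unfolding has_forbidden_def by blast
  show "has_forbidden p w \<or> a = p - 3 \<and> top_critical p w"
  proof (cases v rule: rev_cases)
    case Nil
    with w have "w @ [a] = (u @ [p - 3] @ replicate j (p - 4)) @ [p - 3]" by simp
    then show ?thesis unfolding top_critical_def by blast
  next
    case (snoc v' x)
    with w have "w = u @ [p - 3] @ replicate j (p - 4) @ [p - 3] @ v'" by simp
    then show ?thesis unfolding has_forbidden_def by blast
  qed
next
  assume "has_forbidden p w \<or> a = p - 3 \<and> top_critical p w"
  then show "has_forbidden p (w @ [a])"
  proof
    assume "has_forbidden p w"
    then obtain u v j where "w = u @ [p - 3] @ replicate j (p - 4) @ [p - 3] @ v"
      unfolding has_forbidden_def by blast
    then have "w @ [a] = u @ [p - 3] @ replicate j (p - 4) @ [p - 3] @ (v @ [a])" by simp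
    then show ?thesis unfolding has_forbidden_def by blast
  next
    assume "a = p - 3 \<and> top_critical p w"
    then obtain u j where "a = p - 3" "w = u @ [p - 3] @ replicate j (p - 4)"
      unfolding top_critical_def by blast
    then have "w @ [a] = u @ [p - 3] @ replicate j (p - 4) @ [p - 3] @ []" by simp
    then show ?thesis unfolding has_forbidden_def by blast
  qed
qed

lemma top_critical_snoc:
  "top_critical p (w @ [a]) \<longleftrightarrow> a = p - 3 \<or> a = p - 4 \<and> top_critical p w"
proof
  assume "top_critical p (w @ [a])"
  then obtain u j where w: "w @ [a] = u @ [p - 3] @ replicate j (p - 4)"
    unfolding top_critical_def by blast
  show "a = p - 3 \<or> a = p - 4 \<and> top_critical p w"
  proof (cases j)
    case 0
    with w show ?thesis by simp
  next
    case (Suc i)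
    with w have "w @ [a] = (u @ [p - 3] @ replicate i (p - 4)) @ [p - 4]"
      by (simp flip: replicate_append_same)
    then show ?thesis unfolding top_critical_def by blast
  qed
next
  assume "a = p - 3 \<or> a = p - 4 \<and> top_critical p w"
  then show "top_critical p (w @ [a])"
  proof
    assume "a = p - 3"
    then have "w @ [a] = w @ [p - 3] @ replicate 0 (p - 4)" by simp
    then show ?thesis unfolding top_critical_def by blast
  next
    assume "a = p - 4 \<and> top_critical p w"
    then obtain u j where "a = p - 4" "w = u @ [p - 3] @ replicate j (p - 4)"
      unfolding top_critical_def by blast
    then have "w @ [a] = u @ [p - 3] @ replicate (Suc j) (p - 4)"
      by (simp flip: replicate_append_same)
    then show ?thesis unfolding top_critical_def by blast
  qed
qed

lemma has_forbidden_rev [simp]: "has_forbidden p (rev w) \<longleftrightarrow> has_forbidden p w"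
proof -
  have "has_forbidden p (rev w)" if "has_forbidden p w" for w
  proof -
    from that obtain u v j where "w = u @ [p - 3] @ replicate j (p - 4) @ [p - 3] @ v"
      unfolding has_forbidden_def by blast
    then have "rev w = rev v @ [p - 3] @ replicate j (p - 4) @ [p - 3] @ rev u" by simp
    then show ?thesis unfolding has_forbidden_def by blast
  qed
  from this[of w] this[of "rev w"] show ?thesis by auto
qed

lemma low_critical_iff_top_critical_rev: "low_critical p w \<longleftrightarrow> top_critical p (rev w)"
proof -
  have "(w = replicate j (p - 4) @ [p - 3] @ u) \<longleftrightarrow>
        (rev w = rev u @ [p - 3] @ replicate j (p - 4))" for u j
    by (metis rev_append rev_replicate rev_rev_ident rev_singleton_conv append_assoc)
  then show ?thesis
    unfolding low_critical_def top_critical_def by (metis rev_rev_ident)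
qed

lemma has_forbidden_Cons:
  "has_forbidden p (a # w) \<longleftrightarrow> has_forbidden p w \<or> a = p - 3 \<and> low_critical p w"
  using has_forbidden_snoc[of p "rev w" a] has_forbidden_rev[of p "a # w"]
  by (simp add: low_critical_iff_top_critical_rev)

lemma low_critical_Cons:
  "low_critical p (a # w) \<longleftrightarrow> a = p - 3 \<or> a = p - 4 \<and> low_critical p w"
  using top_critical_snoc[of p "rev w" a] by (simp add: low_critical_iff_top_critical_rev)

lemma admissible_snoc:
  "admissible p (w @ [a]) \<longleftrightarrow> admissible p w \<and> a \<le> p - 3 \<and> \<not> (a = p - 3 \<and> top_critical p w)"
  unfolding admissible_def by (auto simp: has_forbidden_snoc)

lemma admissible_Cons:
  "admissible p (a # w) \<longleftrightarrow> admissible p w \<and> a \<le> p - 3 \<and> \<not> (a = p - 3 \<and> low_critical p w)"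
  unfolding admissible_def by (auto simp: has_forbidden_Cons)

lemma admissible_appendD: "admissible p (w @ v) \<Longrightarrow> admissible p w"
  by (induction v rule: rev_induct) (auto simp: admissible_snoc simp flip: append_assoc)

lemma admissible_append_zeros:
  assumes "admissible p w" and "p \<ge> 4"
  shows "admissible p (w @ replicate k 0)"
  using assms
  by (induction k) (auto simp: admissible_snoc simp flip: replicate_append_same append_assoc)

lemma add_mult_less_add_mult_iff:
  fixes x y a c M :: nat
  assumes "x < M" "y < M"
  shows "x + a * M < y + c * M \<longleftrightarrow> a < c \<or> a = c \<and> x < y"
proof -
  have less: "u + i * M < v + j * M" if "u < M" "i < j" for u v i j :: nat
  proof -
    have "Suc i * M \<le> j * M"
      using that(2) by (intro mult_le_mono1) simp
    with that(1) show ?thesis by simp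
  qed
  show ?thesis
    using less[of x a c y] less[of y c a x] assms by (cases a c rule: linorder_cases) auto
qed

subsection \<open>Metallic numbers\<close>

definition metal_gap :: "nat \<Rightarrow> nat \<Rightarrow> nat" where
  "metal_gap p k = metal p k - (case k of 0 \<Rightarrow> 0 | Suc j \<Rightarrow> metal p j)"

locale metallic =
  fixes p :: nat
  assumes p_ge_5: "5 \<le> p"
begin

lemma metal_less_Suc: "metal p n < metal p (Suc n)"
proof (induction n)
  case 0
  with p_ge_5 show ?case by simp
next
  case (Suc n)
  have "3 * metal p (Suc n) \<le> (p - 2) * metal p (Suc n)"
    using p_ge_5 by (intro mult_le_mono1) simp
  with Suc show ?case by (simp only: metal.simps)
qed

lemma strict_mono_metal: "strict_mono (metal p)"
  by (simp add: strict_mono_Suc_iff metal_less_Suc)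

lemma metal_pos: "0 < metal p n"
  using strict_mono_less_eq[OF strict_mono_metal, of 0 n] by simp

lemma less_metal: "n < metal p n"
proof (induction n)
  case (Suc n)
  then show ?case
    using metal_less_Suc[of n] by simp
qed simp

lemma metal_Suc_eq_gap: "metal p (Suc k) = (p - 3) * metal p k + metal_gap p k"
proof (cases k)
  case 0
  with p_ge_5 show ?thesis by (simp add: metal_gap_def)
next
  case (Suc j)
  have "p - 2 = Suc (p - 3)"
    using p_ge_5 by simp
  moreover have "metal p j \<le> metal p (Suc j)"
    using metal_less_Suc less_imp_le by blast
  ultimately show ?thesis
    using Suc by (simp add: metal_gap_def)
qed

lemma metal_gap_Suc: "metal_gap p (Suc k) = (p - 4) * metal p k + metal_gap p k"
proof -
  have "p - 3 = Suc (p - 4)"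
    using p_ge_5 by simp
  then show ?thesis
    using metal_Suc_eq_gap[of k] by (simp add: metal_gap_def)
qed

subsection \<open>The metallic numeration system\<close>

lemma admissible_word_val_bounds:
  assumes "admissible p w"
  shows "word_val p w < metal p (length w) \<and>
    (\<not> top_critical p w \<longrightarrow> word_val p w < metal_gap p (length w))"
  using assms
proof (induction w rule: rev_induct)
  case Nil
  then show ?case by (simp add: metal_gap_def)
next
  case (snoc a w)
  define M where "M = metal p (length w)"
  from snoc.prems have w: "admissible p w" and a: "a \<le> p - 3"
    and not_crit: "\<not> (a = p - 3 \<and> top_critical p w)"
    by (auto simp: admissible_snoc)
  from snoc.IH[OF w] have IH: "word_val p w < M"
    "\<not> top_critical p w \<Longrightarrow> word_val p w < metal_gap p (length w)"
    by (auto simp: M_def)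
  have val: "word_val p (w @ [a]) = word_val p w + a * M"
    by (simp add: word_val_snoc M_def)
  have below: "word_val p w + a * M < b * M" if "a < b" for b
    using add_mult_less_add_mult_iff[of "word_val p w" M 0 a b] IH(1) that by simp
  have "word_val p (w @ [a]) < metal p (length (w @ [a]))"
  proof (cases "a = p - 3")
    case True
    with IH(2) not_crit val show ?thesis by (simp add: metal_Suc_eq_gap M_def)
  next
    case False
    with a below[of "p - 3"] val show ?thesis by (simp add: metal_Suc_eq_gap M_def)
  qed
  moreover have "word_val p (w @ [a]) < metal_gap p (length (w @ [a]))"
    if "\<not> top_critical p (w @ [a])"
  proof (cases "a = p - 4")
    case True
    with that IH(2) val show ?thesis by (simp add: top_critical_snoc metal_gap_Suc M_def)
  next
    case False
    with that a have "a < p - 4" by (auto simp: top_critical_snoc)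
    with below[of "p - 4"] val show ?thesis by (simp add: metal_gap_Suc M_def)
  qed
  ultimately show ?case by blast
qed

text \<open>The top digit of \<open>n\<close> is \<open>n div m\<^sub>k\<close> if that is below \<open>b\<close>, and \<open>b\<close> otherwise.\<close>

lemma admissible_word_exists_Suc:
  assumes below_metal: "\<And>r. r < metal p k \<Longrightarrow> \<exists>w. length w = k \<and> admissible p w \<and> word_val p w = r"
    and below_gap: "\<And>r. r < metal_gap p k \<Longrightarrow>
      \<exists>w. length w = k \<and> admissible p w \<and> \<not> top_critical p w \<and> word_val p w = r"
    and b: "b = p - 3 \<or> b = p - 4" and n: "n < b * metal p k + metal_gap p k"
  shows "\<exists>w. length w = Suc k \<and> admissible p w \<and> (b = p - 4 \<longrightarrow> \<not> top_critical p w) \<and>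
    word_val p w = n"
proof -
  define M where "M = metal p k"
  obtain a w where w: "length w = k" "admissible p w" "word_val p w + a * M = n"
    and a: "a \<le> b" "a = b \<Longrightarrow> \<not> top_critical p w"
  proof (cases "n < b * M")
    case True
    have "0 < M"
      using metal_pos by (simp add: M_def)
    with True have "n div M < b"
      by (simp add: div_less_iff_less_mult)
    moreover obtain w where "length w = k" "admissible p w" "word_val p w = n mod M"
      using below_metal[of "n mod M"] \<open>0 < M\<close> by (auto simp: M_def)
    ultimately show thesis
      using that[of w "n div M"] by simp
  next
    case False
    with n have "n - b * M < metal_gap p k"
      by (simp add: M_def)
    then obtain w where "length w = k" "admissible p w" "\<not> top_critical p w"
      "word_val p w = n - b * M"
      using below_gap by blast
    with False show thesis
      using that[of w b] by simp
  qed
  have "admissible p (w @ [a])" "b = p - 4 \<longrightarrow> \<not> top_critical p (w @ [a])"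
    using w a b p_ge_5 by (auto simp: admissible_snoc top_critical_snoc)
  moreover have "word_val p (w @ [a]) = n"
    using w by (simp add: word_val_snoc M_def)
  ultimately show ?thesis
    using w by (intro exI[of _ "w @ [a]"]) simp
qed

lemma admissible_word_exists:
  "(\<forall>n < metal p k. \<exists>w. length w = k \<and> admissible p w \<and> word_val p w = n) \<and>
   (\<forall>n < metal_gap p k. \<exists>w. length w = k \<and> admissible p w \<and> \<not> top_critical p w \<and> word_val p w = n)"
proof (induction k)
  case 0
  have "admissible p []" "\<not> top_critical p []"
    unfolding admissible_def has_forbidden_def top_critical_def by simp_all
  then show ?case by (auto simp: metal_gap_def)
next
  case (Suc k)
  have "p - 3 \<noteq> p - 4"
    using p_ge_5 by linarith
  with Suc show ?case
    using admissible_word_exists_Suc[of k "p - 3"] admissible_word_exists_Suc[of k "p - 4"]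
    by (simp add: metal_Suc_eq_gap metal_gap_Suc)
qed

lemma word_val_snoc_less_iff:
  assumes "admissible p w" "admissible p v" "length w = length v"
  shows "word_val p (w @ [a]) < word_val p (v @ [c]) \<longleftrightarrow>
    a < c \<or> a = c \<and> word_val p w < word_val p v"
  using assms admissible_word_val_bounds[of w] admissible_word_val_bounds[of v]
    add_mult_less_add_mult_iff[of "word_val p w" "metal p (length w)" "word_val p v" a c]
  by (simp add: word_val_snoc)

lemma admissible_word_val_inj:
  assumes "admissible p w" "admissible p v" "length w = length v" "word_val p w = word_val p v"
  shows "w = v"
  using assms
proof (induction w arbitrary: v rule: rev_induct)
  case (snoc a w)
  then obtain v' c where v: "v = v' @ [c]" and len: "length w = length v'"
    by (cases v rule: rev_cases) auto
  have adm: "admissible p w" "admissible p v'"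
    using snoc.prems admissible_appendD v by blast+
  have "a = c \<and> word_val p w = word_val p v'"
    using word_val_snoc_less_iff[OF adm len, of a c]
      word_val_snoc_less_iff[OF adm(2,1) len[symmetric], of c a] snoc.prems(4) v
    by auto
  with snoc.IH[OF adm len] v show ?case by simp
qed simp

lemma word_val_Cons_less_Cons:
  assumes "admissible p (b # u)" "admissible p (b' # v)" "length u = length v"
    "word_val p u < word_val p v"
  shows "word_val p (b # u) < word_val p (b' # v)"
  using assms
proof (induction u arbitrary: v rule: rev_induct)
  case (snoc a u)
  then obtain v' c where v: "v = v' @ [c]" and len: "length u = length v'"
    by (cases v rule: rev_cases) auto
  have adm: "admissible p (b # u)" "admissible p (b' # v')"
    using snoc.prems(1,2) admissible_appendD[of p "b # u"] admissible_appendD[of p "b' # v'"] v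
    by auto
  then have "admissible p u" "admissible p v'"
    by (simp_all add: admissible_Cons)
  with snoc.prems(4) v len have "a < c \<or> a = c \<and> word_val p u < word_val p v'"
    by (simp add: word_val_snoc_less_iff)
  with snoc.IH[OF adm len] word_val_snoc_less_iff[OF adm, of a c] len v show ?case
    by auto
qed simp

lemma valid_code_admissible: "valid_code p w \<Longrightarrow> admissible p w"
  unfolding valid_code_def admissible_def by auto

lemma valid_code_word_val_bounds:
  assumes "valid_code p w"
  shows "metal p (length w - 1) \<le> word_val p w" and "word_val p w < metal p (length w)"
proof -
  obtain u a where w: "w = u @ [a]" and "a \<noteq> 0"
    using assms unfolding valid_code_def by (cases w rule: rev_cases) auto
  then have "metal p (length u) \<le> a * metal p (length u)"
    by simp
  also have "\<dots> \<le> word_val p w"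
    using w by (simp add: word_val_snoc)
  finally show "metal p (length w - 1) \<le> word_val p w"
    using w by simp
  show "word_val p w < metal p (length w)"
    using admissible_word_val_bounds[OF valid_code_admissible[OF assms]] by simp
qed

lemma valid_code_word_val_inj:
  assumes "valid_code p w" "valid_code p v" "word_val p w = word_val p v"
  shows "w = v"
proof -
  have "length w = length v"
  proof (rule ccontr)
    assume "length w \<noteq> length v"
    then have "metal p (length w) \<le> metal p (length v - 1) \<or>
      metal p (length v) \<le> metal p (length w - 1)"
      using strict_mono_less_eq[OF strict_mono_metal] by auto
    with assms show False
      using valid_code_word_val_bounds[OF assms(1)] valid_code_word_val_bounds[OF assms(2)]
      by linarith
  qed
  with assms show ?thesis
    using admissible_word_val_inj valid_code_admissible by blast
qed

lemma metal_code_word_val: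
  assumes "valid_code p w"
  shows "metal_code p (word_val p w) = w"
  unfolding metal_code_def using assms valid_code_word_val_inj by blast

lemma valid_code_exists:
  assumes "admissible p w" "1 \<le> word_val p w"
  shows "\<exists>v. valid_code p v \<and> word_val p v = word_val p w"
  using assms
proof (induction w rule: rev_induct)
  case (snoc a w)
  show ?case
  proof (cases "a = 0")
    case True
    with snoc admissible_appendD show ?thesis by (simp add: word_val_snoc)
  next
    case False
    with snoc.prems have "valid_code p (w @ [a])"
      unfolding valid_code_def admissible_def by auto
    then show ?thesis by blast
  qed
qed simp

lemma
  assumes "1 \<le> n"
  shows valid_metal_code: "valid_code p (metal_code p n)"
    and word_val_metal_code: "word_val p (metal_code p n) = n"
proof -
  obtain w where "admissible p w" "word_val p w = n"
    using admissible_word_exists[of n] less_metal by blast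
  with assms obtain v where "valid_code p v" "word_val p v = n"
    using valid_code_exists by metis
  then show "valid_code p (metal_code p n)" "word_val p (metal_code p n) = n"
    using metal_code_word_val by auto
qed

lemma metal_code_digit:
  assumes "1 \<le> n" "n < p - 2"
  shows "metal_code p n = [n]"
proof -
  have "valid_code p [n]"
    using assms unfolding valid_code_def has_forbidden_def by auto
  then show ?thesis
    using metal_code_word_val by (fastforce simp: word_val_def)
qed

lemma metal_code_metal: "metal_code p (metal p n) = replicate n 0 @ [1]"
proof -
  have "\<not> has_forbidden p (replicate n 0 @ [1])"
  proof
    assume "has_forbidden p (replicate n 0 @ [1])"
    then obtain u v j where "replicate n 0 @ [1] = u @ [p - 3] @ replicate j (p - 4) @ [p - 3] @ v"
      unfolding has_forbidden_def by blast
    then have "p - 3 \<in> set (replicate n 0 @ [1])"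
      by simp
    with p_ge_5 show False
      by auto
  qed
  then have "valid_code p (replicate n 0 @ [1])"
    using p_ge_5 unfolding valid_code_def by auto
  then show ?thesis
    using metal_code_word_val word_val_append_zeros[of p "[]" n] by (fastforce simp: word_val_snoc)
qed

end

subsection \<open>Appending a digit\<close>

lemma valid_code_Cons_iff:
  assumes "w \<noteq> []"
  shows "valid_code p (b # w) \<longleftrightarrow>
    valid_code p w \<and> b \<le> p - 3 \<and> \<not> (b = p - 3 \<and> low_critical p w)"
  using assms unfolding valid_code_def by (auto simp: has_forbidden_Cons)

text \<open>0 has no code; the convention \<open>shift p 0 = 0\<close> makes the one-digit numbers the
  numbers with code parent 0.\<close>

definition shift :: "nat \<Rightarrow> nat \<Rightarrow> nat" where
  "shift p n = (if n = 0 then 0 else word_val p (0 # metal_code p n))"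

definition critical :: "nat \<Rightarrow> nat \<Rightarrow> bool" where
  "critical p n \<longleftrightarrow> low_critical p (metal_code p n)"

definition code_parent :: "nat \<Rightarrow> nat \<Rightarrow> nat" where
  "code_parent p n = word_val p (tl (metal_code p n))"

lemma shift_0 [simp]: "shift p 0 = 0"
  by (simp add: shift_def)

context metallic
begin

lemma of_bool_critical_less [simp]: "of_bool (critical p n) < p - 2"
  using p_ge_5 by (cases "critical p n") auto

lemma valid_Cons_metal_code_iff:
  assumes "1 \<le> n"
  shows "valid_code p (b # metal_code p n) \<longleftrightarrow> b + of_bool (critical p n) < p - 2"
proof -
  have "metal_code p n \<noteq> []"
    using valid_metal_code[OF assms] by (simp add: valid_code_def)
  with valid_metal_code[OF assms] p_ge_5 show ?thesis
    by (auto simp: valid_code_Cons_iff critical_def)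
qed

lemma metal_code_shift_add:
  assumes "1 \<le> \<mu>" "b + of_bool (critical p \<mu>) < p - 2"
  shows "metal_code p (shift p \<mu> + b) = b # metal_code p \<mu>"
proof -
  have "word_val p (b # metal_code p \<mu>) = shift p \<mu> + b"
    using assms(1) by (simp add: shift_def word_val_Cons[of p b])
  then show ?thesis
    using metal_code_word_val valid_Cons_metal_code_iff assms by metis
qed

lemma metal_code_shift:
  assumes "1 \<le> \<mu>"
  shows "metal_code p (shift p \<mu>) = 0 # metal_code p \<mu>"
  using metal_code_shift_add[OF assms, of 0] by simp

lemma metal_code_cases:
  assumes "1 \<le> n"
  obtains "n < p - 2" "metal_code p n = [n]"
  | \<mu> b where "1 \<le> \<mu>" "b + of_bool (critical p \<mu>) < p - 2" "n = shift p \<mu> + b"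
      "metal_code p n = b # metal_code p \<mu>"
proof -
  note code = valid_metal_code[OF assms] word_val_metal_code[OF assms]
  obtain b w where bw: "metal_code p n = b # w"
    using code(1) unfolding valid_code_def by (cases "metal_code p n") auto
  show thesis
  proof (cases "w = []")
    case True
    with bw code have "n = b" "b \<le> p - 3"
      by (auto simp: word_val_def valid_code_def)
    with that(1) bw True p_ge_5 show thesis by simp
  next
    case False
    define \<mu> where "\<mu> = word_val p w"
    have w: "valid_code p w"
      using code(1) bw False by (simp add: valid_code_Cons_iff)
    then have "1 \<le> \<mu>"
      using valid_code_word_val_bounds(1)[OF w] metal_pos[of "length w - 1"]
      unfolding \<mu>_def by linarith
    moreover have "metal_code p \<mu> = w"
      using metal_code_word_val[OF w] by (simp add: \<mu>_def)
    moreover from calculation have "b + of_bool (critical p \<mu>) < p - 2"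
      using valid_Cons_metal_code_iff code(1) bw by metis
    moreover from calculation have "n = shift p \<mu> + b"
      using code(2) bw word_val_Cons[of p b w] by (simp add: shift_def \<mu>_def)
    ultimately show thesis
      using that(2) bw by blast
  qed
qed

text \<open>Compare the codes of \<open>\<mu>\<close> and \<open>\<nu>\<close>, the shorter one padded with zeros on top.\<close>

lemma shift_add_less_shift_add:
  assumes "1 \<le> \<mu>" "\<mu> < \<nu>"
    and "b + of_bool (critical p \<mu>) < p - 2" "b' + of_bool (critical p \<nu>) < p - 2"
  shows "shift p \<mu> + b < shift p \<nu> + b'"
proof -
  define w w' where "w = metal_code p \<mu>" and "w' = metal_code p \<nu>"
  have "1 \<le> \<nu>"
    using assms by simp
  have w: "valid_code p w" "word_val p w = \<mu>" and w': "valid_code p w'" "word_val p w' = \<nu>"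
    using valid_metal_code word_val_metal_code \<open>1 \<le> \<mu>\<close> \<open>1 \<le> \<nu>\<close> by (simp_all add: w_def w'_def)
  have "length w \<le> length w'"
  proof (rule ccontr)
    assume "\<not> length w \<le> length w'"
    then have "metal p (length w') \<le> metal p (length w - 1)"
      by (simp add: strict_mono_less_eq[OF strict_mono_metal])
    with assms(2) show False
      using valid_code_word_val_bounds[OF w(1)] valid_code_word_val_bounds[OF w'(1)] w w'
      by linarith
  qed
  define w0 where "w0 = w @ replicate (length w' - length w) 0"
  have "valid_code p (b # w)" "valid_code p (b' # w')"
    using valid_Cons_metal_code_iff assms \<open>1 \<le> \<nu>\<close> by (simp_all add: w_def w'_def)
  then have "admissible p (b # w0)" "admissible p (b' # w')"
    using admissible_append_zeros[of p "b # w"] p_ge_5 valid_code_admissible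
    by (simp_all add: w0_def)
  moreover have "length w0 = length w'" "word_val p w0 < word_val p w'"
    using \<open>length w \<le> length w'\<close> w w' assms(2) by (simp_all add: w0_def)
  ultimately have "word_val p (b # w0) < word_val p (b' # w')"
    by (rule word_val_Cons_less_Cons)
  moreover have "word_val p (b # w0) = shift p \<mu> + b" "word_val p (b' # w') = shift p \<nu> + b'"
    using word_val_append_zeros[of p "b # w"] word_val_Cons[of p b] word_val_Cons[of p b'] assms
    by (simp_all add: w0_def w_def w'_def shift_def)
  ultimately show ?thesis by simp
qed

lemma shift_less_shift_add:
  assumes "1 \<le> \<mu>" "\<mu> < \<nu>" "b + of_bool (critical p \<nu>) < p - 2"
  shows "shift p \<mu> < shift p \<nu> + b"
  using shift_add_less_shift_add[OF assms(1,2) _ assms(3), of 0] by simp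

lemma shift_ge:
  assumes "1 \<le> \<mu>"
  shows "p - 2 \<le> shift p \<mu>"
proof -
  have "valid_code p (0 # metal_code p \<mu>)"
    using valid_Cons_metal_code_iff[OF assms, of 0] by simp
  moreover have "metal_code p \<mu> \<noteq> []"
    using valid_metal_code[OF assms] by (simp add: valid_code_def)
  ultimately have "metal p 1 \<le> word_val p (0 # metal_code p \<mu>)"
    using valid_code_word_val_bounds(1) strict_mono_less_eq[OF strict_mono_metal, of 1]
    by (metis One_nat_def Suc_leI diff_Suc_1 length_Cons length_greater_0_conv order_trans)
  with assms show ?thesis
    by (simp add: shift_def)
qed

lemma strict_mono_shift: "strict_mono (shift p)"
proof (rule strict_monoI)
  fix \<mu> \<nu> :: nat
  assume "\<mu> < \<nu>"
  show "shift p \<mu> < shift p \<nu>"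
  proof (cases "\<mu> = 0")
    case True
    with \<open>\<mu> < \<nu>\<close> show ?thesis
      using shift_ge[of \<nu>] p_ge_5 by (simp add: shift_def)
  next
    case False
    then show ?thesis
      using shift_less_shift_add[of \<mu> \<nu> 0] \<open>\<mu> < \<nu>\<close> by simp
  qed
qed

lemma shift_1: "shift p (Suc 0) = p - 2"
  using metal_code_digit[of 1] p_ge_5 by (simp add: shift_def word_val_def)

lemma shift_Suc_le:
  assumes "1 \<le> \<nu>" "p - 2 \<le> b + of_bool (critical p \<nu>)"
  shows "shift p (Suc \<nu>) \<le> shift p \<nu> + b"
proof -
  have "p - 2 \<le> shift p \<nu> + b"
    using shift_ge[OF assms(1)] by simp
  moreover from this have "1 \<le> shift p \<nu> + b"
    using p_ge_5 by linarith
  ultimately obtain \<mu> b' where \<mu>: "1 \<le> \<mu>" "b' + of_bool (critical p \<mu>) < p - 2"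
    "shift p \<nu> + b = shift p \<mu> + b'"
    using metal_code_cases by (metis leD)
  consider "\<mu> < \<nu>" | "\<mu> = \<nu>" | "Suc \<nu> \<le> \<mu>"
    by linarith
  then show ?thesis
  proof cases
    case 1
    with \<mu> show ?thesis
      using shift_add_less_shift_add[of \<mu> \<nu> b' 0] by simp
  next
    case 2
    with \<mu> assms(2) show ?thesis
      by simp
  next
    case 3
    with \<mu> show ?thesis
      using strict_mono_less_eq[OF strict_mono_shift] by (metis trans_le_add1)
  qed
qed

lemma shift_Suc:
  assumes "1 \<le> \<nu>"
  shows "shift p (Suc \<nu>) + of_bool (critical p \<nu>) = shift p \<nu> + (p - 2)"
proof -
  define c :: nat where "c = of_bool (critical p \<nu>)"
  have "c \<le> 1"
    by (simp add: c_def)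
  have "shift p \<nu> + (p - 3 - c) < shift p (Suc \<nu>) + 0"
    using shift_add_less_shift_add[OF assms, of "Suc \<nu>" "p - 3 - c" 0] p_ge_5 by (simp add: c_def)
  moreover have "shift p (Suc \<nu>) \<le> shift p \<nu> + (p - 2 - c)"
    using shift_Suc_le[OF assms, of "p - 2 - c"] p_ge_5 by (simp add: c_def)
  ultimately show ?thesis
    using \<open>c \<le> 1\<close> p_ge_5 unfolding c_def[symmetric] by linarith
qed

lemma shift_interval_unique:
  assumes "shift p t \<le> x" "x < shift p (Suc t)" "shift p t' \<le> x" "x < shift p (Suc t')"
  shows "t = t'"
proof (rule ccontr)
  assume "t \<noteq> t'"
  then have "shift p (Suc t) \<le> shift p t' \<or> shift p (Suc t') \<le> shift p t"
    by (auto simp: strict_mono_less_eq[OF strict_mono_shift])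
  with assms show False
    by linarith
qed

lemma code_parent_bounds:
  assumes "1 \<le> n"
  shows "shift p (code_parent p n) \<le> n" and "n < shift p (Suc (code_parent p n))"
    and "critical p n \<longleftrightarrow> Suc n = shift p (Suc (code_parent p n))"
proof -
  have "shift p (code_parent p n) \<le> n \<and> n < shift p (Suc (code_parent p n)) \<and>
    (critical p n \<longleftrightarrow> Suc n = shift p (Suc (code_parent p n)))"
  proof (cases rule: metal_code_cases[OF assms])
    case 1
    have "low_critical p [n] \<longleftrightarrow> n = p - 3"
      unfolding low_critical_def by (auto simp: Cons_eq_append_conv)
    with 1 p_ge_5 show ?thesis
      by (auto simp: code_parent_def critical_def shift_1)
  next
    case (2 \<mu> b)
    then have "code_parent p n = \<mu>"
      by (simp add: code_parent_def word_val_metal_code)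
    moreover have "critical p n \<longleftrightarrow> b + 1 + of_bool (critical p \<mu>) = p - 2"
      using 2 p_ge_5 by (auto simp: critical_def low_critical_Cons)
    ultimately show ?thesis
      using 2 shift_Suc[of \<mu>] by auto
  qed
  then show "shift p (code_parent p n) \<le> n" "n < shift p (Suc (code_parent p n))"
    "critical p n \<longleftrightarrow> Suc n = shift p (Suc (code_parent p n))"
    by auto
qed

lemma code_parent_Suc:
  assumes "1 \<le> n"
  shows "code_parent p (Suc n) = code_parent p n + of_bool (critical p n)"
proof -
  define t where "t = code_parent p n + of_bool (critical p n)"
  have "shift p t \<le> Suc n \<and> Suc n < shift p (Suc t)"
  proof (cases "critical p n")
    case True
    then show ?thesis
      using code_parent_bounds[OF assms] strict_mono_shift by (simp add: t_def strict_mono_def)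
  next
    case False
    then show ?thesis
      using code_parent_bounds[OF assms] by (auto simp: t_def)
  qed
  then show ?thesis
    using code_parent_bounds[of "Suc n"] shift_interval_unique[of "code_parent p (Suc n)" "Suc n" t]
    by (simp add: t_def)
qed

lemma code_parent_1: "code_parent p (Suc 0) = 0"
  using metal_code_digit[of 1] p_ge_5 by (simp add: code_parent_def)

lemma shift_Suc_add_code_parent:
  assumes "1 \<le> \<nu>"
  shows "shift p (Suc \<nu>) + code_parent p \<nu> + of_bool (critical p \<nu>) = (p - 2) * Suc \<nu>"
  using assms
proof (induction \<nu> rule: nat_induct_at_least)
  case base
  then show ?case
    using shift_Suc[of 1] shift_1 code_parent_1 by simp
next
  case (Suc \<nu>)
  then show ?case
    using shift_Suc[of "Suc \<nu>"] code_parent_Suc[of \<nu>] by simp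
qed

lemma shift_metal: "shift p (metal p n) = metal p (Suc n)"
proof -
  have "shift p (metal p n) = word_val p (replicate (Suc n) 0 @ [1])"
    using metal_pos[of n] by (simp add: shift_def metal_code_metal)
  also have "\<dots> = metal p (Suc n)"
    by (simp only: word_val_snoc word_val_replicate_0 length_replicate)
  finally show ?thesis .
qed

lemma hd_metal_code_eq_0E:
  assumes "1 \<le> s" "hd (metal_code p s) = 0"
  obtains \<mu> where "1 \<le> \<mu>" "s = shift p \<mu>"
  using assms by (cases rule: metal_code_cases[OF assms(1)]) auto

end

subsection \<open>The white metallic tree\<close>

abbreviation next_free :: "nat \<Rightarrow> (nat \<Rightarrow> nat) \<Rightarrow> nat \<Rightarrow> nat" where
  "next_free p \<alpha> k \<equiv> snd (build p \<alpha> k)"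

abbreviation colour :: "nat \<Rightarrow> (nat \<Rightarrow> nat) \<Rightarrow> nat \<Rightarrow> nat \<Rightarrow> bool" where
  "colour p \<alpha> k \<equiv> fst (build p \<alpha> k)"

lemma next_free_Suc_colour:
  "next_free p \<alpha> (Suc k) = next_free p \<alpha> k + (if colour p \<alpha> k (Suc k) then p - 2 else p - 3)"
  by (simp add: Let_def case_prod_unfold)

lemma colour_Suc:
  "colour p \<alpha> (Suc k) x =
    (if next_free p \<alpha> k \<le> x \<and> x < next_free p \<alpha> (Suc k) then x - next_free p \<alpha> k + 1 \<noteq> \<alpha> (Suc k)
     else colour p \<alpha> k x)"
  by (simp add: Let_def case_prod_unfold)

declare build.simps(2) [simp del]

lemma white_1: "white p \<alpha> 1"
  by (simp add: white_def colour_Suc)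

definition blacks :: "nat \<Rightarrow> (nat \<Rightarrow> nat) \<Rightarrow> nat \<Rightarrow> nat" where
  "blacks p \<alpha> n = (\<Sum>x = 1..n. of_bool (\<not> white p \<alpha> x))"

lemma blacks_Suc: "blacks p \<alpha> (Suc n) = blacks p \<alpha> n + of_bool (\<not> white p \<alpha> (Suc n))"
  by (simp add: blacks_def)

context metallic
begin

lemma next_free_Suc_ge: "next_free p \<alpha> k + 2 \<le> next_free p \<alpha> (Suc k)"
proof -
  have "2 \<le> p - 3" "2 \<le> p - 2"
    using p_ge_5 by linarith+
  then show ?thesis
    by (simp add: next_free_Suc_colour)
qed

lemma strict_mono_next_free: "strict_mono (next_free p \<alpha>)"
  unfolding strict_mono_Suc_iff
proof
  show "next_free p \<alpha> k < next_free p \<alpha> (Suc k)" for k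
    using next_free_Suc_ge[of \<alpha> k] by simp
qed

lemma next_free_ge: "k + 2 \<le> next_free p \<alpha> k"
proof (induction k)
  case (Suc k)
  then show ?case
    using next_free_Suc_ge[of \<alpha> k] by simp
qed simp

lemma colour_stable:
  assumes "x < next_free p \<alpha> k"
  shows "colour p \<alpha> (k + j) x = colour p \<alpha> k x"
proof (induction j)
  case (Suc j)
  have "next_free p \<alpha> k \<le> next_free p \<alpha> (k + j)"
    by (simp add: strict_mono_less_eq[OF strict_mono_next_free])
  with Suc assms show ?case
    by (simp add: colour_Suc)
qed simp

lemma white_Suc: "white p \<alpha> (Suc k) = colour p \<alpha> k (Suc k)"
  using next_free_ge[of k \<alpha>] by (simp add: white_def colour_Suc)

lemma next_free_Suc:
  "next_free p \<alpha> (Suc k) = next_free p \<alpha> k + (if white p \<alpha> (Suc k) then p - 2 else p - 3)"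
  by (simp add: next_free_Suc_colour white_Suc)

lemma white_son:
  assumes "next_free p \<alpha> k \<le> x" "x < next_free p \<alpha> (Suc k)"
  shows "white p \<alpha> x \<longleftrightarrow> x - next_free p \<alpha> k + 1 \<noteq> \<alpha> (Suc k)"
proof -
  have "Suc k \<le> x"
    using next_free_ge[of k \<alpha>] assms(1) by simp
  then have "colour p \<alpha> x x = colour p \<alpha> (Suc k + (x - Suc k)) x"
    by simp
  also have "\<dots> = colour p \<alpha> (Suc k) x"
    using colour_stable[OF assms(2)] by blast
  finally show ?thesis
    using assms by (simp add: white_def colour_Suc)
qed

lemma next_free_add_blacks: "next_free p \<alpha> k + blacks p \<alpha> k = 2 + (p - 2) * k"
proof (induction k)
  case (Suc k)
  have "p - 2 = Suc (p - 3)"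
    using p_ge_5 by simp
  then have "next_free p \<alpha> (Suc k) + of_bool (\<not> white p \<alpha> (Suc k)) = next_free p \<alpha> k + (p - 2)"
    by (simp add: next_free_Suc)
  with Suc show ?case
    by (simp add: blacks_Suc)
qed (simp add: blacks_def)

lemma sons_cover:
  assumes "2 \<le> x"
  obtains k where "next_free p \<alpha> k \<le> x" "x < next_free p \<alpha> (Suc k)"
  using assms
proof (induction x arbitrary: thesis)
  case (Suc x)
  show ?case
  proof (cases "x = 1")
    case True
    then show ?thesis
      using Suc.prems(1)[of 0] next_free_Suc_ge[of \<alpha> 0] by simp
  next
    case False
    with Suc.prems(2) have "2 \<le> x"
      by simp
    with Suc.IH obtain k where k: "next_free p \<alpha> k \<le> x" "x < next_free p \<alpha> (Suc k)"
      by blast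
    show ?thesis
    proof (cases "Suc x < next_free p \<alpha> (Suc k)")
      case True
      with k Suc.prems(1)[of k] show ?thesis by simp
    next
      case False
      with k next_free_Suc_ge[of \<alpha> "Suc k"] Suc.prems(1)[of "Suc k"] show ?thesis by simp
    qed
  qed
qed simp

lemma sons_disjoint:
  assumes "x \<in> sons p \<alpha> \<mu>" "x \<in> sons p \<alpha> \<nu>" "1 \<le> \<mu>" "1 \<le> \<nu>"
  shows "\<mu> = \<nu>"
proof (rule ccontr)
  assume "\<mu> \<noteq> \<nu>"
  then have "next_free p \<alpha> \<mu> \<le> next_free p \<alpha> (\<nu> - 1) \<or> next_free p \<alpha> \<nu> \<le> next_free p \<alpha> (\<mu> - 1)"
    using assms(3,4) by (auto simp: strict_mono_less_eq[OF strict_mono_next_free])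
  with assms(1,2) show False
    by (auto simp: sons_def)
qed

text \<open>Both \<open>next_free \<nu> + blacks \<nu>\<close> and \<open>shift (\<nu> + 1) + code_parent \<nu> + [critical \<nu>]\<close>
  equal \<open>(p - 2) \<nu>\<close> up to a constant, so the bounds reduce to comparing \<open>blacks \<nu>\<close> with
  \<open>code_parent \<nu>\<close>.\<close>

lemma shift_next_free_bounds_if_close:
  assumes "1 \<le> \<nu>" "blacks p \<alpha> \<nu> \<le> code_parent p \<nu> + 1"
    "code_parent p \<nu> + of_bool (critical p \<nu>) \<le> blacks p \<alpha> \<nu> + 1"
  shows "shift p \<nu> < next_free p \<alpha> \<nu> \<and> next_free p \<alpha> \<nu> \<le> shift p (Suc \<nu>)"
  using next_free_add_blacks[of \<alpha> \<nu>] shift_Suc_add_code_parent[OF assms(1)] shift_Suc[OF assms(1)]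
    p_ge_5 assms(2,3)
  by simp linarith

context
  fixes \<alpha> :: "nat \<Rightarrow> nat"
  assumes assignment: "assignment p \<alpha>"
begin

lemma assignment_bounds:
  "1 \<le> \<alpha> (Suc k)" "\<alpha> (Suc k) + next_free p \<alpha> k \<le> next_free p \<alpha> (Suc k)"
  using assignment[unfolded assignment_def, rule_format, of "Suc k"] by (auto simp: sons_def)

lemma blacks_son_eq:
  assumes "next_free p \<alpha> k \<le> x" "x < next_free p \<alpha> (Suc k)"
  shows "blacks p \<alpha> x =
    blacks p \<alpha> (next_free p \<alpha> k - 1) + of_bool (\<alpha> (Suc k) + next_free p \<alpha> k \<le> Suc x)"
  using assms
proof (induction x rule: dec_induct)
  case base
  have "next_free p \<alpha> k = Suc (next_free p \<alpha> k - 1)"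
    using next_free_ge[of k \<alpha>] by simp
  then show ?case
    using blacks_Suc[of p \<alpha> "next_free p \<alpha> k - 1"] white_son[of \<alpha> k "next_free p \<alpha> k"]
      base assignment_bounds(1)[of k] by (auto simp: le_Suc_eq)
next
  case (step n)
  then show ?case
    using blacks_Suc[of p \<alpha> n] white_son[of \<alpha> k "Suc n"] by auto
qed

lemma blacks_before_sons: "blacks p \<alpha> (next_free p \<alpha> k - 1) = k"
proof (induction k)
  case 0
  show ?case
    using white_1 by (simp add: blacks_def)
next
  case (Suc k)
  have "next_free p \<alpha> k \<le> next_free p \<alpha> (Suc k) - 1"
    "next_free p \<alpha> (Suc k) - 1 < next_free p \<alpha> (Suc k)"
    using next_free_Suc_ge[of \<alpha> k] by simp_all
  with Suc show ?case
    using blacks_son_eq assignment_bounds(2)[of k] by simp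
qed

lemma blacks_son:
  assumes "next_free p \<alpha> k \<le> x" "x < next_free p \<alpha> (Suc k)"
  shows "blacks p \<alpha> x = k + of_bool (\<alpha> (Suc k) + next_free p \<alpha> k \<le> Suc x)"
  using blacks_son_eq[OF assms] blacks_before_sons[of k] by simp

lemma blacks_close_to_code_parent:
  assumes k: "next_free p \<alpha> k \<le> \<nu>" "\<nu> < next_free p \<alpha> (Suc k)"
    and IH: "shift p k < next_free p \<alpha> k" "next_free p \<alpha> (Suc k) \<le> shift p (Suc (Suc k))"
  shows "blacks p \<alpha> \<nu> \<le> code_parent p \<nu> + 1 \<and>
    code_parent p \<nu> + of_bool (critical p \<nu>) \<le> blacks p \<alpha> \<nu> + 1"
proof -
  have "1 \<le> \<nu>"
    using k next_free_ge[of k \<alpha>] by simp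
  define \<tau> where "\<tau> = code_parent p \<nu>"
  have \<tau>: "shift p \<tau> \<le> \<nu>" "\<nu> < shift p (Suc \<tau>)" "critical p \<nu> \<longleftrightarrow> Suc \<nu> = shift p (Suc \<tau>)"
    using code_parent_bounds \<open>1 \<le> \<nu>\<close> by (simp_all add: \<tau>_def)
  text \<open>The code parent \<open>\<tau>\<close> of \<open>\<nu>\<close> is its tree parent \<open>Suc k\<close> or the node \<open>k\<close> just before it.\<close>
  have "k \<le> \<tau>"
  proof (rule ccontr)
    assume "\<not> k \<le> \<tau>"
    then have "shift p (Suc \<tau>) \<le> shift p k"
      by (simp add: strict_mono_less_eq[OF strict_mono_shift])
    with \<tau> IH k show False
      by linarith
  qed
  have "\<tau> \<le> Suc k"
  proof (rule ccontr)
    assume "\<not> \<tau> \<le> Suc k"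
    then have "shift p (Suc (Suc k)) \<le> shift p \<tau>"
      by (simp add: strict_mono_less_eq[OF strict_mono_shift])
    with \<tau> IH k show False
      by linarith
  qed
  have blacks: "blacks p \<alpha> \<nu> = k + of_bool (\<alpha> (Suc k) + next_free p \<alpha> k \<le> Suc \<nu>)"
    using blacks_son[OF k] .
  have "\<tau> + of_bool (critical p \<nu>) \<le> blacks p \<alpha> \<nu> + 1"
  proof (cases "\<tau> = Suc k \<and> critical p \<nu>")
    case True
    with \<tau> IH k have "next_free p \<alpha> (Suc k) = Suc \<nu>"
      by simp
    then have "\<alpha> (Suc k) + next_free p \<alpha> k \<le> Suc \<nu>"
      using assignment_bounds(2)[of k] by simp
    with True blacks show ?thesis
      by simp
  next
    case False
    with \<open>\<tau> \<le> Suc k\<close> blacks show ?thesis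
      by auto
  qed
  moreover have "blacks p \<alpha> \<nu> \<le> \<tau> + 1"
    using blacks \<open>k \<le> \<tau>\<close> by simp
  ultimately show ?thesis
    by (simp add: \<tau>_def)
qed

lemma shift_next_free_bounds: "shift p \<nu> < next_free p \<alpha> \<nu> \<and> next_free p \<alpha> \<nu> \<le> shift p (Suc \<nu>)"
proof (induction \<nu> rule: less_induct)
  case (less \<nu>)
  consider "\<nu> = 0" | "\<nu> = 1" | "2 \<le> \<nu>"
    by linarith
  then show ?case
  proof cases
    case 1
    with p_ge_5 show ?thesis
      by (simp add: shift_1)
  next
    case 2
    then show ?thesis
      using shift_next_free_bounds_if_close[of 1 \<alpha>] white_1[of p \<alpha>] code_parent_1
      by (simp add: blacks_def)
  next
    case 3
    then obtain k where k: "next_free p \<alpha> k \<le> \<nu>" "\<nu> < next_free p \<alpha> (Suc k)"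
      using sons_cover by blast
    then have "Suc k < \<nu>"
      using next_free_ge[of k \<alpha>] by simp
    with less.IH have "shift p k < next_free p \<alpha> k"
      "next_free p \<alpha> (Suc k) \<le> shift p (Suc (Suc k))"
      by auto
    with 3 show ?thesis
      using shift_next_free_bounds_if_close blacks_close_to_code_parent[OF k] by simp
  qed
qed

lemma shift_in_sons:
  assumes "1 \<le> \<nu>"
  shows "shift p \<nu> \<in> sons p \<alpha> \<nu>"
  using shift_next_free_bounds[of \<nu>] shift_next_free_bounds[of "\<nu> - 1"] assms
  by (simp add: sons_def)

lemma son_eq_shift_if_hd_metal_code_eq_0:
  assumes "1 \<le> \<nu>" "s \<in> sons p \<alpha> \<nu>" "hd (metal_code p s) = 0"
  shows "s = shift p \<nu>"
proof -
  have "1 \<le> s"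
    using assms(2) next_free_ge[of "\<nu> - 1" \<alpha>] by (simp add: sons_def)
  with assms(3) obtain \<mu> where "1 \<le> \<mu>" "s = shift p \<mu>"
    using hd_metal_code_eq_0E by blast
  moreover from this have "\<mu> = \<nu>"
    using sons_disjoint[OF _ assms(2) _ assms(1)] shift_in_sons by blast
  ultimately show ?thesis
    by simp
qed

end

end

theorem theorem7:
  fixes p :: nat and \<alpha> :: "nat \<Rightarrow> nat"
  assumes "p \<ge> 5" and "assignment p \<alpha>"
  shows "(\<forall>\<nu>\<ge>1. (\<exists>!s. s \<in> sons p \<alpha> \<nu> \<and> hd (metal_code p s) = 0)
              \<and> (\<forall>s\<in>sons p \<alpha> \<nu>. hd (metal_code p s) = 0 \<longrightarrow> metal_code p s = 0 # metal_code p \<nu>))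
         \<and> (\<forall>n. metal p (Suc n) \<in> sons p \<alpha> (metal p n) \<and> hd (metal_code p (metal p (Suc n))) = 0)"
proof -
  interpret metallic p
    using assms(1) by unfold_locales
  have "(\<exists>!s. s \<in> sons p \<alpha> \<nu> \<and> hd (metal_code p s) = 0) \<and>
    (\<forall>s\<in>sons p \<alpha> \<nu>. hd (metal_code p s) = 0 \<longrightarrow> metal_code p s = 0 # metal_code p \<nu>)"
    if "1 \<le> \<nu>" for \<nu>
  proof -
    have "shift p \<nu> \<in> sons p \<alpha> \<nu> \<and> hd (metal_code p (shift p \<nu>)) = 0"
      using shift_in_sons[OF assms(2) that] metal_code_shift[OF that] by simp
    with son_eq_shift_if_hd_metal_code_eq_0[OF assms(2) that] metal_code_shift[OF that]
    show ?thesis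
      by blast
  qed
  moreover have "metal p (Suc n) \<in> sons p \<alpha> (metal p n) \<and> hd (metal_code p (metal p (Suc n))) = 0"
    for n
    using shift_in_sons[OF assms(2), of "metal p n"] metal_code_shift[of "metal p n"]
      metal_pos[of n]
    by (simp add: shift_metal)
  ultimately show ?thesis
    by blast
qed

end
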